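(* Let $m,n\geq 2$. Let $\pi\in S(\mathbb{Z}_m)$ and $\pi_x\in S(\mathbb{Z}_n)$ for each $x\in\mathbb{Z}_m$, and define $\sigma\in S(\mathbb{Z}_m\times\mathbb{Z}_n)$ by $\sigma(x,y)=(\pi(x),\pi_x(y))$. Let $c\in S(\mathbb{Z}_m\times\mathbb{Z}_n)$ be given by $c(x,y)=(x+1,y)$ if $x\neq m-1$ and $c(x,y)=(x+1,y+1)$ if $x=m-1$. Let $i\in\mathbb{Z}_m$, let $b$ be a positive integer, and let $t$ be an integer such that the permutation $y\mapsto\pi_i(y+t)$ of $\mathbb{Z}_n$ has at least $b$ cycles. Then there is an integer $k$ such that $\sigma c^k$ has at least $b+1$ cycles.
   Context: $S(X)$ denotes the set of bijections of a finite set $X$; the number of cycles of a permutation counts fixed points as cycles. (Under the bijection $\mathbb{Z}_{mn}\to\mathbb{Z}_m\times\mathbb{Z}_n$, $r+mt\mapsto(r,t)$ for $0\le r<m$, $0\le t<n$, the map $c$ corresponds to $z\mapsto z+1$.) *)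

theory Defs
  imports Main
begin

definition num_cycles :: "('a \<Rightarrow> 'a) \<Rightarrow> 'a set \<Rightarrow> nat" where
  "num_cycles p X = card ((\<lambda>x. {(p ^^ k) x | k. True}) ` X)"

text \<open>Z_m x Z_n represented as {0..<m} x {0..<n}.\<close>
definition grid :: "nat \<Rightarrow> nat \<Rightarrow> (nat \<times> nat) set" where
  "grid m n = {..<m} \<times> {..<n}"

definition cmap :: "nat \<Rightarrow> nat \<Rightarrow> nat \<times> nat \<Rightarrow> nat \<times> nat" where
  "cmap m n = (\<lambda>(x, y). if x \<noteq> m - 1 then ((x + 1) mod m, y)
                        else ((x + 1) mod m, (y + 1) mod n))"

definition cpow :: "nat \<Rightarrow> nat \<Rightarrow> int \<Rightarrow> nat \<times> nat \<Rightarrow> nat \<times> nat" where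
  "cpow m n k = (if k \<ge> 0 then cmap m n ^^ nat k
                 else inv_into (grid m n) (cmap m n) ^^ nat (- k))"

definition sigma :: "(nat \<Rightarrow> nat) \<Rightarrow> (nat \<Rightarrow> nat \<Rightarrow> nat) \<Rightarrow> nat \<times> nat \<Rightarrow> nat \<times> nat" where
  "sigma p ps = (\<lambda>(x, y). (p x, ps x y))"

end

theory Submission
  imports Defs
begin

text \<open>Choose k \<ge> 0 so that c^k maps the fibre {p(i)} \<times> Z_n onto the fibre {i} \<times> Z_n,
  shifting the second coordinate by t. Then the fibre {p(i)} \<times> Z_n is invariant under \<sigma> c^k,
  which acts on it as y \<mapsto> \<pi>_i(y + t), so its cycles alone number at least b; since m \<ge> 2
  there is a point outside this fibre, and its cycle is one more.\<close>

definition forward_orbit :: "('a \<Rightarrow> 'a) \<Rightarrow> 'a \<Rightarrow> 'a set" where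
  "forward_orbit f x = {(f ^^ k) x | k. True}"

lemma num_cycles_forward_orbit: "num_cycles f X = card (forward_orbit f ` X)"
  by (simp add: num_cycles_def forward_orbit_def)

lemma self_in_forward_orbit: "x \<in> forward_orbit f x"
  unfolding forward_orbit_def by (metis (mono_tags) funpow_0 mem_Collect_eq)

lemma forward_orbit_subset:
  assumes "f ` A \<subseteq> A" and "x \<in> A"
  shows "forward_orbit f x \<subseteq> A"
proof -
  have "(f ^^ k) x \<in> A" for k
    by (induction k) (use assms in auto)
  then show ?thesis
    unfolding forward_orbit_def by blast
qed

lemma num_cycles_invariant_subset_less:
  assumes "finite X" and "A \<subseteq> X" and "f ` A \<subseteq> A"
    and "z \<in> X" and "z \<notin> A"
  shows "num_cycles f A < num_cycles f X"
proof -
  have "forward_orbit f z \<notin> forward_orbit f ` A"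
  proof
    assume "forward_orbit f z \<in> forward_orbit f ` A"
    then obtain a where "a \<in> A" and "forward_orbit f z = forward_orbit f a"
      by blast
    then have "z \<in> forward_orbit f a"
      using self_in_forward_orbit by metis
    then have "z \<in> A"
      using forward_orbit_subset[OF assms(3) \<open>a \<in> A\<close>] by blast
    with assms(5) show False ..
  qed
  then have "forward_orbit f ` A \<subset> forward_orbit f ` X"
    using image_mono[OF assms(2)] imageI[OF assms(4)] by (metis psubsetI)
  then show ?thesis
    unfolding num_cycles_forward_orbit
    using assms(1) by (simp add: psubset_card_mono)
qed

lemma forward_orbit_semiconj:
  assumes "\<And>y. y \<in> A \<Longrightarrow> f (h y) = h (g y)" and "g ` A \<subseteq> A" and "y \<in> A"
  shows "forward_orbit f (h y) = h ` forward_orbit g y"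
proof -
  have "(f ^^ k) (h y) = h ((g ^^ k) y) \<and> (g ^^ k) y \<in> A" for k
    by (induction k) (use assms in auto)
  then show ?thesis
    unfolding forward_orbit_def by auto
qed

lemma num_cycles_semiconj:
  assumes "inj h" and "\<And>y. y \<in> A \<Longrightarrow> f (h y) = h (g y)" and "g ` A \<subseteq> A"
  shows "num_cycles f (h ` A) = num_cycles g A"
proof -
  have "forward_orbit f ` h ` A = image h ` forward_orbit g ` A"
    using forward_orbit_semiconj[of A f h g, OF assms(2,3)]
    by (force simp: image_image)
  moreover have "inj (image h)"
    using assms(1) by (simp add: inj_on_def inj_image_eq_iff)
  ultimately show ?thesis
    unfolding num_cycles_forward_orbit by (simp add: card_image inj_on_subset)
qed

lemma cmap_funpow:
  assumes "x < m" and "y < n"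
  shows "(cmap m n ^^ K) (x, y) = ((x + K) mod m, (y + (x + K) div m) mod n)"
proof (induction K)
  case 0
  then show ?case using assms by simp
next
  case (Suc K)
  show ?case
  proof (cases "(x + K) mod m = m - 1")
    case True
    then have "Suc ((x + K) mod m) = m" using assms by simp
    then show ?thesis using Suc True
      by (simp add: cmap_def mod_Suc div_Suc mod_Suc_eq)
  next
    case False
    then have "Suc ((x + K) mod m) \<noteq> m" using assms by simp
    then show ?thesis using Suc False
      by (simp add: cmap_def mod_Suc div_Suc)
  qed
qed

lemma cmap_funpow_fibre_to_fibre:
  assumes "x < m" and "x' < m" and "n > 0"
  obtains K where "\<And>y. y < n \<Longrightarrow> (cmap m n ^^ K) (x, y) = (x', (y + s) mod n)"
proof
  \<comment> \<open>s + n \<equiv> s (mod n), but it is positive, so m (s + n) > x and the subtraction does not truncate\<close>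
  define K where "K = x' + m * (s + n) - x"
  have "m * (s + n) \<ge> m"
    using assms(3) by simp
  then have "x + K = x' + m * (s + n)"
    unfolding K_def using assms(1) by linarith
  then have "(x + K) mod m = x'" and "(x + K) div m = s + n"
    using assms(2) by simp_all
  then show "(cmap m n ^^ K) (x, y) = (x', (y + s) mod n)" if "y < n" for y
    using cmap_funpow[OF assms(1) that] by (simp add: add.assoc[symmetric])
qed

lemma cpow_fibre_shift:
  assumes "x < m" and "x' < m" and "n > 0"
  obtains K :: nat
  where "\<And>y. y < n \<Longrightarrow> cpow m n (int K) (x, y) = (x', nat ((int y + t) mod int n))"
proof -
  obtain K
    where K: "\<And>y. y < n \<Longrightarrow> (cmap m n ^^ K) (x, y) = (x', (y + nat (t mod int n)) mod n)"
    using cmap_funpow_fibre_to_fibre[OF assms, where s = "nat (t mod int n)"] by blast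
  have "(y + nat (t mod int n)) mod n = nat ((int y + t) mod int n)" for y
  proof -
    have "int ((y + nat (t mod int n)) mod n) = (int y + t mod int n) mod int n"
      using assms(3) by (simp add: zmod_int)
    also have "\<dots> = (int y + t) mod int n"
      by (simp add: mod_add_right_eq)
    finally show ?thesis
      by (metis nat_int)
  qed
  with K show ?thesis
    by (intro that) (simp add: cpow_def)
qed

lemma num_cycles_invariant_fibre_less:
  assumes "m \<ge> 2" and "n > 0" and "x < m"
    and "\<And>y. y < n \<Longrightarrow> f (x, y) = (x, g y)" and "g ` {..<n} \<subseteq> {..<n}"
  shows "num_cycles g {..<n} < num_cycles f (grid m n)"
proof -
  have "num_cycles g {..<n} = num_cycles f (Pair x ` {..<n})"
    by (rule num_cycles_semiconj[symmetric])
      (use assms(4,5) in \<open>auto simp: inj_on_def\<close>)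
  also have "\<dots> < num_cycles f (grid m n)"
  proof (rule num_cycles_invariant_subset_less)
    show "(if x = 0 then 1 else 0, 0) \<in> grid m n"
      and "(if x = 0 then 1 else 0, 0) \<notin> Pair x ` {..<n}"
      using assms(1,2) by (auto simp: grid_def)
    show "f ` Pair x ` {..<n} \<subseteq> Pair x ` {..<n}"
      using assms(4,5) by auto
  qed (use assms(3) in \<open>auto simp: grid_def\<close>)
  finally show ?thesis .
qed

theorem lemma4p9:
  fixes m n :: nat and p :: "nat \<Rightarrow> nat" and ps :: "nat \<Rightarrow> nat \<Rightarrow> nat"
    and i b :: nat and t :: int
  assumes "m \<ge> 2" and "n \<ge> 2"
    and "bij_betw p {..<m} {..<m}"
    and "\<And>x. x < m \<Longrightarrow> bij_betw (ps x) {..<n} {..<n}"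
    and "i < m" and "b > 0"
    and "num_cycles (\<lambda>y. ps i (nat ((int y + t) mod int n))) {..<n} \<ge> b"
  shows "\<exists>k::int. num_cycles (sigma p ps \<circ> cpow m n k) (grid m n) \<ge> b + 1"
proof -
  define g where "g = (\<lambda>y. ps i (nat ((int y + t) mod int n)))"
  have "n > 0"
    using assms(2) by simp
  have "p i < m"
    using assms(3,5) bij_betwE by blast
  then obtain K
    where K: "\<And>y. y < n \<Longrightarrow> cpow m n (int K) (p i, y) = (i, nat ((int y + t) mod int n))"
    using cpow_fibre_shift[OF _ assms(5) \<open>n > 0\<close>] by blast
  define f where "f = sigma p ps \<circ> cpow m n (int K)"
  have "f (p i, y) = (p i, g y)" if "y < n" for y
    using K[OF that] by (simp add: f_def sigma_def g_def)
  moreover have "g ` {..<n} \<subseteq> {..<n}"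
    using \<open>n > 0\<close> bij_betw_imp_surj_on[OF assms(4)[OF assms(5)]]
    by (auto simp: g_def nat_less_iff)
  ultimately have "num_cycles g {..<n} < num_cycles f (grid m n)"
    using num_cycles_invariant_fibre_less[OF assms(1) \<open>n > 0\<close> \<open>p i < m\<close>]
    by blast
  with assms(7) show ?thesis
    unfolding f_def g_def by (metis Suc_eq_plus1 Suc_leI order_le_less_trans)
qed

end
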